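(* Let $\mu$ be a positive finite Borel measure on $[0,1)$, let $\gamma>0$ and $\delta\in(-\gamma,1-\gamma)$. The following are equivalent: (i) $I_\mu$ is a well defined continuous operator from $H^\infty_{v_\gamma}$ into $H^\infty_{v_{\gamma+\delta}}$; (ii) $I_\mu$ is a well defined continuous operator from $H^0_{v_\gamma}$ into $H^0_{v_{\gamma+\delta}}$, and $1/v_\gamma\in L_1([0,1),\mu)$; (iii) $\mu$ is a $(1-\delta)$-Carleson measure; (iv) $\mu_n=O\left(\frac{1}{n^{1-\delta}}\right)$ as $n\to\infty$.
   Context: $\mathbb{D}$ is the open unit disc and $H(\mathbb{D})$ the space of holomorphic functions on $\mathbb{D}$. For a positive finite Borel measure $\mu$ on $[0,1)$, $\mu_n=\int_0^1 t^n\,d\mu(t)$ ($n\ge 0$) are its moments, and $I_\mu(f)(z)=\int_0^1\frac{f(t)}{1-tz}\,d\mu(t)$ for $f\in H(\mathbb{D})$ whenever this defines a holomorphic function on $\mathbb{D}$. For $\gamma>0$, $v_\gamma(z)=(1-|z|)^\gamma$; $H^\infty_{v}=\{f\in H(\mathbb{D}):\|f\|_v:=\sup_{z\in\mathbb{D}}v(z)|f(z)|<\infty\}$ and $H^0_v=\{f\in H^\infty_v:\lim_{|z|\to1^-}v(z)|f(z)|=0\}$, both Banach spaces with norm $\|\cdot\|_v$. For $s>0$, $\mu$ is an $s$-Carleson measure if $\mu([t,1))=O((1-t)^s)$ as $t\to1^-$. *)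

theory Defs
  imports "HOL-Analysis.Analysis" "HOL-Library.Landau_Symbols"
begin

definition vw :: "real \<Rightarrow> complex \<Rightarrow> real" where
  "vw g z = (1 - norm z) powr g"

definition Hinf :: "real \<Rightarrow> (complex \<Rightarrow> complex) \<Rightarrow> bool" where
  "Hinf g f \<longleftrightarrow> f holomorphic_on ball 0 1 \<and>
     bounded ((\<lambda>z. vw g z * norm (f z)) ` ball 0 1)"

definition H0 :: "real \<Rightarrow> (complex \<Rightarrow> complex) \<Rightarrow> bool" where
  "H0 g f \<longleftrightarrow> Hinf g f \<and>
     (\<forall>e>0. \<exists>r<1. \<forall>z\<in>ball 0 1. r < norm z \<longrightarrow> vw g z * norm (f z) < e)"

definition wnorm :: "real \<Rightarrow> (complex \<Rightarrow> complex) \<Rightarrow> real" where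
  "wnorm g f = (SUP z\<in>ball 0 1. vw g z * norm (f z))"

definition Imu :: "real measure \<Rightarrow> (complex \<Rightarrow> complex) \<Rightarrow> complex \<Rightarrow> complex" where
  "Imu \<mu> f z = (\<integral>t. f (complex_of_real t) / (1 - complex_of_real t * z) \<partial>\<mu>)"

definition Imu_defined :: "real measure \<Rightarrow> (complex \<Rightarrow> complex) \<Rightarrow> bool" where
  "Imu_defined \<mu> f \<longleftrightarrow>
     (\<forall>z\<in>ball 0 1. integrable \<mu> (\<lambda>t. f (complex_of_real t) / (1 - complex_of_real t * z)))
     \<and> Imu \<mu> f holomorphic_on ball 0 1"

text \<open>I_mu is a well defined continuous (= bounded, by linearity) operator from the
  space X (in weight g1) into the space Y (in weight g2), both with the weighted sup norm.\<close>
definition Imu_bounded ::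
  "real measure \<Rightarrow> (real \<Rightarrow> (complex \<Rightarrow> complex) \<Rightarrow> bool) \<Rightarrow> real \<Rightarrow> real \<Rightarrow> bool" where
  "Imu_bounded \<mu> Sp g1 g2 \<longleftrightarrow>
     (\<forall>f. Sp g1 f \<longrightarrow> Imu_defined \<mu> f \<and> Sp g2 (Imu \<mu> f)) \<and>
     (\<exists>C. \<forall>f. Sp g1 f \<longrightarrow> wnorm g2 (Imu \<mu> f) \<le> C * wnorm g1 f)"

definition moment :: "real measure \<Rightarrow> nat \<Rightarrow> real" where
  "moment \<mu> n = (\<integral>t. t ^ n \<partial>\<mu>)"

definition carleson :: "real \<Rightarrow> real measure \<Rightarrow> bool" where
  "carleson s \<mu> \<longleftrightarrow> (\<lambda>t. measure \<mu> {t..<1}) \<in> O[at_left 1](\<lambda>t. (1 - t) powr s)"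

end

theory Submission
  imports Defs
begin

(* Testing I_mu on f_r(z) = (1 - r z) powr (-gamma), which lies in the unit ball of H^0_{v_gamma},
   and evaluating at z = r gives mu([r,1)) <= (2 (1 - r))^(gamma + 1) |I_mu f_r (r)|; so boundedness
   of I_mu into the weight gamma + delta forces mu([r,1)) = O((1 - r)^(1 - delta)).
   Conversely, cutting [0,1) into the dyadic layers 1 - t in (2^-(k+1), 2^-k] turns an s-Carleson
   bound into  int (1 - t)^(-gamma) (h + 1 - t)^(-a) dmu = O(h^(s - gamma - a))  whenever
   gamma < s < gamma + a.  As |1 - t z| >= ((1 - |z|) + (1 - t)) / 2, the case a = 1, s = 1 - delta
   bounds the weighted norm of I_mu f, with h = 1 - |z|; for f in H^0 the part of the integral near 1
   is small, which gives the vanishing condition, and h = 1 shows 1/v_gamma in L^1(mu).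
   For the moments, t^n <= (2m)^m n^(-m) (1/n + 1 - t)^(-m) reduces mu_n = O(n^(-s)) to the case
   gamma = 0, a = m > s; conversely t^n >= 1/2 on [1 - 1/(2n), 1) bounds the tail by 2 mu_n. *)

lemma dyadic_bracket:
  fixes y :: real
  assumes "0 < y" "y \<le> 1"
  obtains k where "(1/2)^Suc k < y" "y \<le> (1/2)^k"
proof -
  have ex: "\<exists>n. (1/2::real)^n < y" using real_arch_pow_inv[of y "1/2"] assms by simp
  define k0 where "k0 = (LEAST n. (1/2::real)^n < y)"
  have k0: "(1/2::real)^k0 < y" unfolding k0_def by (rule LeastI_ex[OF ex])
  moreover have "k0 \<noteq> 0" using k0 assms by (intro notI) simp
  ultimately obtain k where k: "k0 = Suc k" using not0_implies_Suc by blast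
  have "\<not> (1/2::real)^k < y"
    using not_less_Least[of k "\<lambda>n. (1/2::real)^n < y"] k unfolding k0_def by simp
  then show ?thesis using that k0 k by simp
qed

lemma half_power_powr: "((1/2::real)^j) powr e = 2 powr (- real j * e)"
proof -
  have "(1/2::real)^j = 2 powr (- real j)"
    by (simp add: powr_minus_divide powr_realpow power_one_over)
  then show ?thesis by (simp add: powr_powr)
qed

lemma two_sided_geometric_series:
  fixes x :: real
  assumes "0 \<le> x" "x < 1"
  shows "summable (\<lambda>j. x ^ nat \<bar>int j - int n\<bar>)" (is "summable ?f")
    and "(\<Sum>j. x ^ nat \<bar>int j - int n\<bar>) \<le> 2 / (1 - x)"
proof -
  have shift: "(\<lambda>j. ?f (j + n)) = (\<lambda>j. x ^ j)" by simp
  have geom: "summable (\<lambda>j. x ^ j)" "(\<Sum>j. x ^ j) = 1 / (1 - x)"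
    using assms by (simp_all add: summable_geometric suminf_geometric)
  show summ: "summable ?f" using summable_iff_shift[of ?f n] shift geom by simp
  have "(\<Sum>j<n. ?f j) \<le> (\<Sum>j<n. x ^ (n - Suc j))"
    using assms by (intro sum_mono power_decreasing) auto
  also have "\<dots> = (\<Sum>j<n. x ^ j)" by (rule sum.nat_diff_reindex)
  also have "\<dots> \<le> (\<Sum>j. x ^ j)" by (rule sum_le_suminf[OF geom(1)]) (use assms in auto)
  finally have "(\<Sum>j<n. ?f j) \<le> 1 / (1 - x)" using geom(2) by simp
  moreover have "(\<Sum>j. ?f j) = (\<Sum>j. x ^ j) + (\<Sum>j<n. ?f j)"
    using suminf_split_initial_segment[OF summ, of n] shift by simp
  ultimately show "(\<Sum>j. ?f j) \<le> 2 / (1 - x)" using geom by simp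
qed

lemma dyadic_exponent_le:
  fixes \<gamma> s a r :: real
  assumes "0 \<le> r" "r \<le> \<gamma> + a - s" "r \<le> s - \<gamma>"
  shows "real (Suc k) * \<gamma> + real (min (Suc k) (Suc n)) * a - real k * s
    \<le> s + real (Suc n) * (\<gamma> + a - s) - real (nat \<bar>int k - int n\<bar>) * r"
proof -
  define p where "p = \<gamma> + a - s"
  define d where "d = nat \<bar>int k - int n\<bar>"
  show ?thesis
  proof (cases "k \<le> n")
    case True
    then have "real n = real k + real d" by (simp add: d_def of_nat_diff)
    moreover have "real d * r \<le> real d * p" using assms by (intro mult_left_mono) (auto simp: p_def)
    moreover have "real (Suc k) * \<gamma> + real (Suc k) * a - real k * s = s + p + real k * p"
      by (simp add: p_def algebra_simps)
    ultimately show ?thesis using True by (simp add: d_def[symmetric] p_def[symmetric] distrib_right)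
  next
    case False
    then have "real k = real n + real d" by (simp add: d_def of_nat_diff)
    moreover have "real d * r \<le> real d * (s - \<gamma>)" using assms by (intro mult_left_mono) auto
    moreover have "real (Suc n) * a = real (Suc n) * (p + s - \<gamma>)" by (simp add: p_def)
    ultimately show ?thesis using False by (simp add: d_def[symmetric] p_def[symmetric] algebra_simps)
  qed
qed

(* The k-th term bounds the contribution of the layer 1 - t in (2^-(k+1), 2^-k] to the kernel
   integral at a scale h <= 2^-n: the kernel is at most the first factor there (see
   kernel_le_dyadic_layer), and an s-Carleson measure gives the layer mass O(2^(-k s)). *)
lemma dyadic_kernel_series:
  fixes \<gamma> s a :: real
  assumes "\<gamma> < s" "s < \<gamma> + a"
  obtains B where "0 \<le> B"
    "\<And>n. summable (\<lambda>k. 2 powr (real (Suc k) * \<gamma> + real (min (Suc k) (Suc n)) * a) * 2 powr (- real k * s))"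
    "\<And>n h. 0 < h \<Longrightarrow> h \<le> (1/2)^n \<Longrightarrow>
       (\<Sum>k. 2 powr (real (Suc k) * \<gamma> + real (min (Suc k) (Suc n)) * a) * 2 powr (- real k * s))
         \<le> B * h powr (s - \<gamma> - a)"
proof -
  define p where "p = \<gamma> + a - s"
  define r where "r = min p (s - \<gamma>)"
  define x where "x = (2::real) powr (- r)"
  have r: "0 < r" "r \<le> p" "r \<le> s - \<gamma>" using assms by (auto simp: r_def p_def)
  have x: "0 \<le> x" "x < 1" using r by (auto simp: x_def intro: powr_less_one)
  define B where "B = 2 powr (s + p) * (2 / (1 - x))"
  \<comment> \<open>the terms grow like \<open>2 powr (k p)\<close> up to \<open>k = n\<close> and decay like \<open>2 powr (k (\<gamma> - s))\<close> beyond\<close>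
  have termwise: "2 powr (real (Suc k) * \<gamma> + real (min (Suc k) (Suc n)) * a) * 2 powr (- real k * s)
      \<le> 2 powr (s + p) * 2 powr (real n * p) * x ^ nat \<bar>int k - int n\<bar>" for k n
  proof -
    have "x ^ nat \<bar>int k - int n\<bar> = 2 powr (- (real (nat \<bar>int k - int n\<bar>) * r))"
      by (simp add: x_def powr_power)
    moreover have "real (Suc k) * \<gamma> + real (min (Suc k) (Suc n)) * a - real k * s
        \<le> s + p + real n * p - real (nat \<bar>int k - int n\<bar>) * r"
      using dyadic_exponent_le[of r \<gamma> a s k n] r by (simp add: p_def algebra_simps)
    ultimately show ?thesis by (simp add: powr_add[symmetric])
  qed
  have geo: "summable (\<lambda>k. x ^ nat \<bar>int k - int n\<bar>)" "(\<Sum>k. x ^ nat \<bar>int k - int n\<bar>) \<le> 2 / (1 - x)" for n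
    using two_sided_geometric_series[OF x] by auto
  have major: "summable (\<lambda>k. 2 powr (s + p) * 2 powr (real n * p) * x ^ nat \<bar>int k - int n\<bar>)" for n
    using geo by (intro summable_mult)
  have summ: "summable (\<lambda>k. 2 powr (real (Suc k) * \<gamma> + real (min (Suc k) (Suc n)) * a) * 2 powr (- real k * s))"
    for n by (rule summable_comparison_test'[OF major]) (use termwise in auto)
  show ?thesis
  proof (rule that[OF _ summ])
    show "0 \<le> B" using x by (simp add: B_def)
  next
    fix n :: nat and h :: real
    assume h: "0 < h" "h \<le> (1/2)^n"
    have "(\<Sum>k. 2 powr (real (Suc k) * \<gamma> + real (min (Suc k) (Suc n)) * a) * 2 powr (- real k * s))
        \<le> (\<Sum>k. 2 powr (s + p) * 2 powr (real n * p) * x ^ nat \<bar>int k - int n\<bar>)"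
      by (intro suminf_le termwise summ major)
    also have "\<dots> = 2 powr (s + p) * 2 powr (real n * p) * (\<Sum>k. x ^ nat \<bar>int k - int n\<bar>)"
      using geo by (intro suminf_mult)
    also have "\<dots> \<le> 2 powr (s + p) * 2 powr (real n * p) * (2 / (1 - x))"
      by (intro mult_left_mono geo) auto
    also have "\<dots> = B * ((1/2)^n) powr (- p)" by (simp add: B_def half_power_powr)
    also have "\<dots> \<le> B * h powr (- p)"
      using h r x by (intro mult_left_mono powr_mono2') (auto simp: B_def)
    also have "- p = s - \<gamma> - a" by (simp add: p_def)
    finally show "(\<Sum>k. 2 powr (real (Suc k) * \<gamma> + real (min (Suc k) (Suc n)) * a) * 2 powr (- real k * s))
        \<le> B * h powr (s - \<gamma> - a)" .
  qed
qed

lemma kernel_le_dyadic_layer: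
  fixes y h \<gamma> a :: real
  assumes "0 \<le> \<gamma>" "0 < a" "(1/2)^Suc k < y" "(1/2)^Suc n < h"
  shows "y powr (-\<gamma>) * (h + y) powr (-a) \<le> 2 powr (real (Suc k) * \<gamma> + real (min (Suc k) (Suc n)) * a)"
proof -
  have "0 < (1/2::real)^Suc k" "0 < (1/2::real)^Suc n" by simp_all
  then have "0 < y" "0 < h" using assms(3,4) by linarith+
  then have "(1/2::real)^min (Suc k) (Suc n) < h + y" using assms(3,4) by (auto simp: min_def)
  then have "(h + y) powr (-a) \<le> ((1/2)^min (Suc k) (Suc n)) powr (-a)"
    using assms(2) by (intro powr_mono2') auto
  moreover have "y powr (-\<gamma>) \<le> ((1/2)^Suc k) powr (-\<gamma>)"
    using assms(1,3) by (intro powr_mono2') auto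
  moreover have "((1/2)^Suc k) powr (-\<gamma>) = 2 powr (real (Suc k) * \<gamma>)"
    "((1/2)^min (Suc k) (Suc n)) powr (-a) = 2 powr (real (min (Suc k) (Suc n)) * a)"
    unfolding half_power_powr by (simp_all add: algebra_simps)
  ultimately show ?thesis unfolding powr_add by (intro mult_mono) auto
qed

lemma power_mult_one_plus_le_one:
  fixes t :: real
  assumes "0 \<le> t" "t \<le> 1"
  shows "t ^ k * (1 + real k * (1 - t)) \<le> 1"
proof (induction k)
  case (Suc k)
  have "t ^ Suc k * (1 + real (Suc k) * (1 - t)) = t * (t ^ k * (1 + real k * (1 - t))) + t ^ Suc k * (1 - t)"
    by (simp add: algebra_simps)
  also have "\<dots> \<le> t * 1 + 1 * (1 - t)"
    using Suc assms by (intro add_mono mult_left_mono mult_right_mono) (auto simp: power_le_one mult_le_one)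
  finally show ?case by simp
qed simp

lemma power_mult_one_plus_power_le:
  fixes t :: real
  assumes t: "0 \<le> t" "t \<le> 1" and m: "1 \<le> m" "m \<le> n"
  shows "t ^ n * (1 + real n * (1 - t)) ^ m \<le> (2 * real m) ^ m"
proof -
  define k where "k = n div m"
  have k: "1 \<le> k" using div_le_mono[OF m(2), of m] m by (simp add: k_def)
  have "n = k * m + n mod m" by (simp add: k_def)
  also have "\<dots> < k * m + m" using m by simp
  also have "\<dots> \<le> 2 * m * k" using k by (simp add: algebra_simps)
  finally have "real n \<le> real (2 * m * k)" by (intro of_nat_mono) simp
  then have n: "real n \<le> 2 * real m * real k" by simp
  have "t ^ n \<le> (t ^ k) ^ m"
    unfolding power_mult[symmetric] using t by (intro power_decreasing) (auto simp: k_def)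
  moreover have "1 + real n * (1 - t) \<le> 2 * real m * (1 + real k * (1 - t))"
    using mult_right_mono[OF n, of "1 - t"] m t by (simp add: algebra_simps)
  ultimately have "t ^ n * (1 + real n * (1 - t)) ^ m \<le> (t ^ k) ^ m * (2 * real m * (1 + real k * (1 - t))) ^ m"
    using t by (intro mult_mono power_mono) auto
  also have "\<dots> = (2 * real m) ^ m * (t ^ k * (1 + real k * (1 - t))) ^ m"
    by (simp add: power_mult_distrib)
  also have "\<dots> \<le> (2 * real m) ^ m"
    using power_mult_one_plus_le_one[OF t, of k] t by (simp add: mult_left_le power_le_one)
  finally show ?thesis .
qed

lemma power_le_kernel:
  fixes t :: real
  assumes t: "0 \<le> t" "t < 1" and m: "1 \<le> m" "m \<le> n"
  shows "t ^ n \<le> (2 * real m) ^ m / real n ^ m * (1 / real n + (1 - t)) powr (- real m)"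
proof -
  have n: "0 < real n" using m by simp
  have pos: "0 < 1 / real n + (1 - t)" using t n by (simp add: add_pos_pos)
  have "t ^ n * (real n * (1 / real n + (1 - t))) ^ m \<le> (2 * real m) ^ m"
    using power_mult_one_plus_power_le[of t m n] t m n by (simp add: algebra_simps)
  moreover have "0 < (real n * (1 / real n + (1 - t))) ^ m" using n pos by simp
  ultimately have "t ^ n \<le> (2 * real m) ^ m / (real n * (1 / real n + (1 - t))) ^ m"
    by (simp add: pos_le_divide_eq)
  also have "\<dots> = (2 * real m) ^ m / real n ^ m * (1 / (1 / real n + (1 - t)) ^ m)"
    by (simp add: power_mult_distrib)
  also have "1 / (1 / real n + (1 - t)) ^ m = (1 / real n + (1 - t)) powr (- real m)"
    using pos by (simp add: powr_minus_divide powr_realpow)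
  finally show ?thesis .
qed

lemma half_le_power_at_scale:
  fixes y :: real
  assumes "0 < y" "y \<le> 1/4"
  shows "1/2 \<le> (1 - y) ^ nat \<lfloor>1 / (2 * y)\<rfloor>" "1 / (4 * y) \<le> real (nat \<lfloor>1 / (2 * y)\<rfloor>)"
proof -
  define n where "n = nat \<lfloor>1 / (2 * y)\<rfloor>"
  have n: "1 / (2 * y) - 1 < real n" "real n \<le> 1 / (2 * y)" using assms by (auto simp: n_def)
  have "1 \<le> 1 / (4 * y)" using assms by (simp add: field_simps)
  moreover have "1 / (2 * y) = 2 * (1 / (4 * y))" by simp
  ultimately show "1 / (4 * y) \<le> real n" using n by linarith
  have "1 - real n * y \<le> (1 - y) ^ n"
    using Bernoulli_inequality[of "- y" n] assms by simp
  moreover have "real n * y \<le> 1/2" using n(2) assms by (simp add: field_simps)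
  ultimately show "1/2 \<le> (1 - y) ^ n" by simp
qed

lemma divide_difference_second_order:
  fixes G T w z a b :: "'a :: field"
  assumes "a \<noteq> 0" "b \<noteq> 0" "b - a = T * (w - z)"
  shows "G / a - G / b - (w - z) * (G * T / b ^ 2) = (w - z) ^ 2 * (G * T ^ 2 / (a * b ^ 2))"
proof -
  have linear: "(w - z) * (G * T / b ^ 2) = G * (b - a) / b ^ 2"
    unfolding assms(3) by (simp add: algebra_simps)
  have quadratic: "(w - z) ^ 2 * (G * T ^ 2 / (a * b ^ 2)) = G * (b - a) ^ 2 / (a * b ^ 2)"
    unfolding assms(3) by (simp add: power_mult_distrib mult_ac)
  have "G / a - G / b - G * (b - a) / b ^ 2 = G * (b - a) ^ 2 / (a * b ^ 2)"
    using assms(1,2) by (simp add: field_simps power2_eq_square)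
  then show ?thesis unfolding linear quadratic .
qed

lemma norm_one_minus_real_mult_ge:
  fixes z :: complex and t :: real
  assumes "0 \<le> t" "t \<le> 1" "norm z \<le> 1"
  shows "1 - norm z \<le> norm (1 - of_real t * z)" "1 - t \<le> norm (1 - of_real t * z)"
proof -
  have "1 - t * norm z \<le> norm (1 - of_real t * z)"
    using norm_triangle_ineq2[of 1 "of_real t * z"] assms by (simp add: norm_mult)
  moreover have "t * norm z \<le> norm z" "t * norm z \<le> t"
    using assms by (simp_all add: mult_left_le_one_le mult_left_le)
  ultimately show "1 - norm z \<le> norm (1 - of_real t * z)" "1 - t \<le> norm (1 - of_real t * z)"
    by linarith+
qed

lemma norm_cauchy_kernel_remainder_le:
  fixes G z w :: complex and t :: real
  assumes "0 \<le> t" "t \<le> 1" "norm z < 1" "norm w < 1"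
  shows "norm (G / (1 - of_real t * w) - G / (1 - of_real t * z) - (w - z) * (G * of_real t / (1 - of_real t * z) ^ 2))
    \<le> norm (w - z) ^ 2 * norm G / ((1 - norm w) * (1 - norm z) ^ 2)"
proof -
  have a: "1 - norm w \<le> norm (1 - of_real t * w)" and b: "1 - norm z \<le> norm (1 - of_real t * z)"
    using norm_one_minus_real_mult_ge(1) assms by auto
  then have "1 - of_real t * w \<noteq> 0" "1 - of_real t * z \<noteq> 0" using assms by auto
  then have eq: "G / (1 - of_real t * w) - G / (1 - of_real t * z) - (w - z) * (G * of_real t / (1 - of_real t * z) ^ 2)
      = (w - z) ^ 2 * (G * of_real t ^ 2 / ((1 - of_real t * w) * (1 - of_real t * z) ^ 2))"
    by (rule divide_difference_second_order) (simp add: algebra_simps)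
  have "norm ((w - z) ^ 2 * (G * of_real t ^ 2 / ((1 - of_real t * w) * (1 - of_real t * z) ^ 2)))
      = norm (w - z) ^ 2 * (norm G * t ^ 2 / (norm (1 - of_real t * w) * norm (1 - of_real t * z) ^ 2))"
    using assms by (simp add: norm_mult norm_divide norm_power)
  also have "\<dots> \<le> norm (w - z) ^ 2 * (norm G * 1 / ((1 - norm w) * (1 - norm z) ^ 2))"
    using a b assms
    by (intro mult_left_mono divide_mono mult_mono power_mono power_le_one mult_pos_pos zero_less_power) auto
  finally show ?thesis unfolding eq by simp
qed

definition cauchy_majorant :: "real \<Rightarrow> real \<Rightarrow> real \<Rightarrow> real" where
  "cauchy_majorant \<gamma> h t = (1 - t) powr (-\<gamma>) * (h + (1 - t)) powr (-1)"

lemma norm_divide_one_minus_real_mult_le: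
  fixes z w :: complex and t A \<gamma> :: real
  assumes "norm z < 1" "0 \<le> t" "t < 1" "norm w \<le> A * (1 - t) powr (-\<gamma>)"
  shows "norm (w / (1 - of_real t * z)) \<le> 2 * A * cauchy_majorant \<gamma> (1 - norm z) t"
proof -
  have "((1 - norm z) + (1 - t)) / 2 \<le> norm (1 - of_real t * z)"
    using norm_one_minus_real_mult_ge[of t z] assms by simp
  moreover have "0 < (1 - norm z) + (1 - t)" using assms by simp
  moreover have "0 \<le> A * (1 - t) powr (-\<gamma>)" using assms(4) norm_ge_zero order_trans by blast
  ultimately have "norm w / norm (1 - of_real t * z) \<le> (A * (1 - t) powr (-\<gamma>)) / (((1 - norm z) + (1 - t)) / 2)"
    using assms(4) by (intro frac_le) auto
  then show ?thesis
    using \<open>0 < (1 - norm z) + (1 - t)\<close> by (simp add: cauchy_majorant_def norm_divide powr_minus_divide mult_ac)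
qed

lemma norm_divide_one_minus_real_mult_split_le:
  fixes z w :: complex and t r W \<epsilon> \<gamma> :: real
  assumes z: "norm z < 1" and t: "0 \<le> t" "t < 1" and r: "0 \<le> r" "r < 1" and "0 \<le> \<gamma>" "0 \<le> \<epsilon>"
    and global: "norm w \<le> W * (1 - t) powr (-\<gamma>)"
    and near: "r < t \<Longrightarrow> norm w \<le> \<epsilon> * (1 - t) powr (-\<gamma>)"
  shows "norm (w / (1 - of_real t * z))
    \<le> 2 * \<epsilon> * cauchy_majorant \<gamma> (1 - norm z) t + W * (1 - r) powr (-\<gamma>) / (1 - r)"
proof -
  have "0 \<le> W * (1 - t) powr (-\<gamma>)" using global norm_ge_zero order_trans by blast
  then have W: "0 \<le> W" using t by (simp add: zero_le_mult_iff)
  show ?thesis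
  proof (cases "r < t")
    case True
    then have "norm (w / (1 - of_real t * z)) \<le> 2 * \<epsilon> * cauchy_majorant \<gamma> (1 - norm z) t"
      using z t near by (intro norm_divide_one_minus_real_mult_le) auto
    moreover have "0 \<le> W * (1 - r) powr (-\<gamma>) / (1 - r)" using W r by simp
    ultimately show ?thesis by linarith
  next
    case False
    have "(1 - t) powr (-\<gamma>) \<le> (1 - r) powr (-\<gamma>)" using False t r assms(6) by (intro powr_mono2') auto
    then have "norm w \<le> W * (1 - r) powr (-\<gamma>)"
      using global mult_left_mono[OF _ W] by (meson order_trans)
    moreover have "1 - r \<le> norm (1 - of_real t * z)"
      using norm_one_minus_real_mult_ge(2)[of t z] False t z by simp
    ultimately have "norm (w / (1 - of_real t * z)) \<le> W * (1 - r) powr (-\<gamma>) / (1 - r)"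
      unfolding norm_divide using r W by (intro frac_le) auto
    moreover have "0 \<le> 2 * \<epsilon> * cauchy_majorant \<gamma> (1 - norm z) t"
      using assms(7) by (simp add: cauchy_majorant_def)
    ultimately show ?thesis by linarith
  qed
qed

section \<open>Weighted spaces and test functions\<close>

lemma weight_of_real: "0 \<le> t \<Longrightarrow> vw g (of_real t) = (1 - t) powr g"
  by (simp add: vw_def)

lemma weight_small_near_boundary:
  assumes "0 < g" "0 < c"
  obtains r where "r < 1" "\<And>z. norm z < 1 \<Longrightarrow> r < norm z \<Longrightarrow> vw g z < c"
proof
  show "1 - c powr (1/g) < 1" using assms by simp
  fix z :: complex assume z: "norm z < 1" "1 - c powr (1/g) < norm z"
  then have "(1 - norm z) powr g < (c powr (1/g)) powr g"
    using assms by (intro powr_less_mono2) auto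
  then show "vw g z < c" using assms by (simp add: vw_def powr_powr)
qed

lemma Hinf_weighted_norm_le_wnorm:
  "Hinf g f \<Longrightarrow> z \<in> ball 0 1 \<Longrightarrow> vw g z * norm (f z) \<le> wnorm g f"
  unfolding Hinf_def wnorm_def by (intro cSUP_upper bounded_imp_bdd_above) auto

lemma wnorm_le: "(\<And>z. z \<in> ball 0 1 \<Longrightarrow> vw g z * norm (f z) \<le> B) \<Longrightarrow> wnorm g f \<le> B"
  unfolding wnorm_def by (rule cSUP_least) auto

lemma wnorm_nonneg: "Hinf g f \<Longrightarrow> 0 \<le> wnorm g f"
  using Hinf_weighted_norm_le_wnorm[of g f 0] by (simp add: vw_def order_trans[rotated])

lemma HinfI:
  assumes "f holomorphic_on ball 0 1" "\<And>z. z \<in> ball 0 1 \<Longrightarrow> vw g z * norm (f z) \<le> B"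
  shows "Hinf g f"
  unfolding Hinf_def bounded_iff using assms by (intro conjI exI[of _ B]) (auto simp: vw_def abs_mult)

lemma Hinf_norm_of_real_le:
  assumes "Hinf g f" "0 \<le> t" "t < 1"
  shows "norm (f (of_real t)) \<le> wnorm g f * (1 - t) powr (-g)"
proof -
  have "(1 - t) powr g * norm (f (of_real t)) \<le> wnorm g f"
    using Hinf_weighted_norm_le_wnorm[OF assms(1), of "of_real t"] assms by (simp add: vw_def)
  then show ?thesis using assms by (simp add: powr_minus field_simps)
qed

lemma H0_norm_of_real_small:
  assumes "H0 g f" "0 < \<epsilon>"
  obtains r where "0 \<le> r" "r < 1" "\<And>t. r < t \<Longrightarrow> t < 1 \<Longrightarrow> norm (f (of_real t)) \<le> \<epsilon> * (1 - t) powr (-g)"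
proof -
  obtain r0 where "r0 < 1" and r0: "\<And>z. z \<in> ball 0 1 \<Longrightarrow> r0 < norm z \<Longrightarrow> vw g z * norm (f z) < \<epsilon>"
    using assms unfolding H0_def by blast
  have "norm (f (of_real t)) \<le> \<epsilon> * (1 - t) powr (-g)" if "max r0 0 < t" "t < 1" for t
  proof -
    have "(1 - t) powr g * norm (f (of_real t)) \<le> \<epsilon>"
      using r0[of "of_real t"] that by (simp add: weight_of_real)
    then show ?thesis using that by (simp add: powr_minus field_simps)
  qed
  then show ?thesis using that[of "max r0 0"] \<open>r0 < 1\<close> by simp
qed

definition test_fun :: "real \<Rightarrow> real \<Rightarrow> complex \<Rightarrow> complex" where
  "test_fun g r z = (1 - of_real r * z) powr (- of_real g)"

lemma test_fun_holomorphic: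
  assumes "0 \<le> r" "r < 1"
  shows "test_fun g r holomorphic_on ball 0 1"
  unfolding test_fun_def
proof (intro holomorphic_intros)
  fix z :: complex assume "z \<in> ball 0 1"
  have "Re (of_real r * z) \<le> r * norm z"
    using complex_Re_le_cmod[of "of_real r * z"] assms by (simp add: norm_mult)
  also have "\<dots> \<le> norm z" using assms by (simp add: mult_left_le_one_le)
  also have "\<dots> < 1" using \<open>z \<in> ball 0 1\<close> by simp
  finally show "1 - of_real r * z \<notin> \<real>\<^sub>\<le>\<^sub>0" by (simp add: complex_nonpos_Reals_iff)
qed

lemma norm_test_fun: "norm (test_fun g r z) = norm (1 - of_real r * z) powr (-g)"
  unfolding test_fun_def by (subst norm_powr_real_powr') auto

lemma test_fun_of_real:
  assumes "0 \<le> r" "r \<le> 1" "0 \<le> t" "t \<le> 1"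
  shows "test_fun g r (of_real t) = of_real ((1 - r * t) powr (-g))"
proof -
  have "0 \<le> 1 - r * t" using assms by (simp add: mult_le_one)
  then show ?thesis unfolding test_fun_def by (simp flip: powr_of_real)
qed

lemma test_fun_in_H0:
  assumes "0 \<le> r" "r < 1" "0 < g"
  shows "H0 g (test_fun g r)" "wnorm g (test_fun g r) \<le> 1"
proof -
  \<comment> \<open>\<open>\<bar>1 - r z\<bar>\<close> dominates both \<open>1 - \<bar>z\<bar>\<close> (uniform bound) and \<open>1 - r\<close> (decay at the boundary)\<close>
  have bound: "vw g z * norm (test_fun g r z) \<le> min 1 (vw g z * (1 - r) powr (-g))" if "z \<in> ball 0 1" for z
  proof -
    have z: "norm z < 1" using that by simp
    then have "norm (1 - of_real r * z) powr (-g) \<le> (1 - norm z) powr (-g)"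
      "norm (1 - of_real r * z) powr (-g) \<le> (1 - r) powr (-g)"
      using norm_one_minus_real_mult_ge[of r z] assms by (auto intro!: powr_mono2')
    then have "vw g z * norm (test_fun g r z) \<le> (1 - norm z) powr g * (1 - norm z) powr (-g)"
      "vw g z * norm (test_fun g r z) \<le> vw g z * (1 - r) powr (-g)"
      by (auto simp: norm_test_fun vw_def intro: mult_left_mono)
    then show ?thesis using z by (simp add: powr_add[symmetric])
  qed
  show "wnorm g (test_fun g r) \<le> 1" using bound by (intro wnorm_le) auto
  have H: "Hinf g (test_fun g r)"
    using bound by (intro HinfI test_fun_holomorphic assms) auto
  have "\<exists>r'<1. \<forall>z\<in>ball 0 1. r' < norm z \<longrightarrow> vw g z * norm (test_fun g r z) < e" if "e > 0" for e
  proof -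
    obtain r' where "r' < 1" "\<And>z. norm z < 1 \<Longrightarrow> r' < norm z \<Longrightarrow> vw g z < e * (1 - r) powr g"
      using weight_small_near_boundary[of g "e * (1 - r) powr g"] assms \<open>e > 0\<close> by auto
    moreover have "vw g z * (1 - r) powr (-g) < e" if "vw g z < e * (1 - r) powr g" for z
      using that assms by (simp add: powr_minus field_simps)
    ultimately show ?thesis using bound by (meson mem_ball_0 min.boundedE le_less_trans)
  qed
  then show "H0 g (test_fun g r)" using H unfolding H0_def by blast
qed

section \<open>Carleson measures and moments\<close>

locale unit_interval_measure = finite_measure \<mu> for \<mu> :: "real measure" +
  assumes space_eq: "space \<mu> = {0..<1}"
    and sets_eq: "sets \<mu> = sets (restrict_space borel {0..<1})"
begin

lemma borel_measurable_of_borel: "f \<in> borel_measurable borel \<Longrightarrow> f \<in> borel_measurable \<mu>"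
  by (subst measurable_cong_sets[OF sets_eq refl]) (rule measurable_restrict_space1)

lemma borel_measurable_of_continuous_on:
  "continuous_on {0..<1} f \<Longrightarrow> f \<in> borel_measurable \<mu>"
  by (subst measurable_cong_sets[OF sets_eq refl]) (rule borel_measurable_continuous_on_restrict)

lemma tail_in_sets: "0 \<le> t \<Longrightarrow> {t..<1} \<in> sets \<mu>"
  unfolding sets_eq by (subst sets_restrict_space_iff) auto

lemma integrable_power: "integrable \<mu> (\<lambda>t. t ^ n)"
  by (rule integrable_const_bound[where B = 1])
    (auto simp: space_eq power_le_one intro!: AE_I2 borel_measurable_of_borel)

lemma carleson_uniform_bound:
  assumes "carleson s \<mu>" "0 \<le> s"
  obtains K where "\<forall>t\<in>{0..<1}. measure \<mu> {t..<1} \<le> K * (1 - t) powr s"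
proof -
  obtain c where "eventually (\<lambda>t. norm (measure \<mu> {t..<1}) \<le> c * norm ((1 - t) powr s)) (at_left 1)"
    using assms(1) unfolding carleson_def by (elim landau_o.bigE)
  then obtain b where b: "b < 1" "\<And>t. b < t \<Longrightarrow> t < 1 \<Longrightarrow> measure \<mu> {t..<1} \<le> c * (1 - t) powr s"
    unfolding eventually_at_left_field by auto
  define t1 where "t1 = (max b 0 + 1) / 2"
  have t1: "b < t1" "0 \<le> t1" "t1 < 1" using b by (auto simp: t1_def)
  define K where "K = max c (measure \<mu> (space \<mu>) / (1 - t1) powr s)"
  have "measure \<mu> {t..<1} \<le> K * (1 - t) powr s" if t: "t \<in> {0..<1}" for t
  proof (cases "b < t")
    case True
    then have "measure \<mu> {t..<1} \<le> c * (1 - t) powr s" using b t by auto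
    also have "\<dots> \<le> K * (1 - t) powr s" by (intro mult_right_mono) (auto simp: K_def)
    finally show ?thesis .
  next
    case False
    have "measure \<mu> {t..<1} \<le> measure \<mu> (space \<mu>)" by (rule bounded_measure)
    also have "\<dots> = measure \<mu> (space \<mu>) / (1 - t1) powr s * (1 - t1) powr s" using t1 by simp
    also have "\<dots> \<le> measure \<mu> (space \<mu>) / (1 - t1) powr s * (1 - t) powr s"
      using False t1 t assms(2) by (intro mult_left_mono powr_mono2) auto
    also have "\<dots> \<le> K * (1 - t) powr s" by (intro mult_right_mono) (auto simp: K_def)
    finally show ?thesis .
  qed
  then show ?thesis using that by blast
qed

lemma carleson_of_uniform_bound:
  assumes "\<And>t. t \<in> {0..<1} \<Longrightarrow> measure \<mu> {t..<1} \<le> K * (1 - t) powr s"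
  shows "carleson s \<mu>"
  unfolding carleson_def
proof (rule landau_o.bigI[of "max K 1"])
  show "eventually (\<lambda>t. norm (measure \<mu> {t..<1}) \<le> max K 1 * norm ((1 - t) powr s)) (at_left (1::real))"
  proof (rule eventually_at_left_1)
    fix t :: real assume t: "0 < t" "t < 1"
    have "measure \<mu> {t..<1} \<le> K * (1 - t) powr s" using assms t by auto
    also have "\<dots> \<le> max K 1 * (1 - t) powr s" by (intro mult_right_mono) auto
    finally show "norm (measure \<mu> {t..<1}) \<le> max K 1 * norm ((1 - t) powr s)" by simp
  qed
qed simp

lemma integral_le_dyadic_series:
  assumes K: "\<forall>t\<in>{0..<1}. measure \<mu> {t..<1} \<le> K * (1 - t) powr s"
    and c: "\<And>k. 0 \<le> c k" "summable (\<lambda>k. c k * 2 powr (- real k * s))"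
    and g: "g \<in> borel_measurable \<mu>" "\<And>t. t \<in> {0..<1} \<Longrightarrow> 0 \<le> g t"
    and layer: "\<And>t. t \<in> {0..<1} \<Longrightarrow> \<exists>k. 1 - (1/2)^k \<le> t \<and> g t \<le> c k"
  shows "integrable \<mu> g" "integral\<^sup>L \<mu> g \<le> K * (\<Sum>k. c k * 2 powr (- real k * s))"
proof -
  have K0: "0 \<le> K" using K[rule_format, of 0] measure_nonneg[of \<mu> "{0..<1}"] by (simp del: measure_nonneg)
  define A where "A k = {1 - (1/2::real)^k..<1}" for k :: nat
  have A: "A k \<in> sets \<mu>" for k unfolding A_def by (rule tail_in_sets) (simp add: power_le_one)
  have "(\<integral>\<^sup>+t. ennreal (g t) \<partial>\<mu>) \<le> (\<integral>\<^sup>+t. (\<Sum>k. ennreal (c k) * indicator (A k) t) \<partial>\<mu>)"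
  proof (rule nn_integral_mono)
    fix t assume "t \<in> space \<mu>"
    then obtain k where k: "1 - (1/2)^k \<le> t" "g t \<le> c k" "t < 1" using layer space_eq by fastforce
    have "ennreal (g t) \<le> ennreal (c k) * indicator (A k) t"
      using k by (simp add: A_def ennreal_leI)
    also have "\<dots> = (\<Sum>j\<in>{k}. ennreal (c j) * indicator (A j) t)"
      by (simp only: sum.insert[OF finite.emptyI empty_iff[THEN iffD1, THEN notI]] sum.empty add_0_right)
    also have "\<dots> \<le> (\<Sum>j. ennreal (c j) * indicator (A j) t)" by (rule sum_le_suminf[OF summableI]) auto
    finally show "ennreal (g t) \<le> (\<Sum>j. ennreal (c j) * indicator (A j) t)" .
  qed
  also have "\<dots> = (\<Sum>k. ennreal (c k) * emeasure \<mu> (A k))"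
    using A by (subst nn_integral_suminf) (auto simp: nn_integral_cmult_indicator)
  also have "\<dots> \<le> (\<Sum>k. ennreal (K * (c k * 2 powr (- real k * s))))"
  proof (intro suminf_le summableI)
    fix k
    have "measure \<mu> (A k) \<le> K * 2 powr (- real k * s)"
      using K[rule_format, of "1 - (1/2)^k"] by (simp add: A_def power_le_one half_power_powr)
    then have "ennreal (c k) * emeasure \<mu> (A k) \<le> ennreal (c k) * ennreal (K * 2 powr (- real k * s))"
      by (simp add: emeasure_eq_measure mult_left_mono ennreal_leI)
    also have "\<dots> = ennreal (K * (c k * 2 powr (- real k * s)))"
      using c(1)[of k] by (simp add: ennreal_mult'[symmetric] mult_ac)
    finally show "ennreal (c k) * emeasure \<mu> (A k) \<le> ennreal (K * (c k * 2 powr (- real k * s)))" .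
  qed
  also have "\<dots> = ennreal (K * (\<Sum>k. c k * 2 powr (- real k * s)))"
    using K0 c by (intro suminf_ennreal_eq sums_mult summable_sums) auto
  finally have le: "(\<integral>\<^sup>+t. ennreal (g t) \<partial>\<mu>) \<le> ennreal (K * (\<Sum>k. c k * 2 powr (- real k * s)))" .
  have g0: "AE t in \<mu>. 0 \<le> g t" using g(2) space_eq by (intro AE_I2) auto
  show int: "integrable \<mu> g"
    using le by (intro integrableI_nonneg[OF g(1) g0]) (simp add: le_less_trans)
  have "0 \<le> K * (\<Sum>k. c k * 2 powr (- real k * s))"
    using K0 c by (intro mult_nonneg_nonneg suminf_nonneg) auto
  moreover have "ennreal (integral\<^sup>L \<mu> g) \<le> ennreal (K * (\<Sum>k. c k * 2 powr (- real k * s)))"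
    using le nn_integral_eq_integral[OF int g0] by simp
  ultimately show "integral\<^sup>L \<mu> g \<le> K * (\<Sum>k. c k * 2 powr (- real k * s))"
    by (simp add: ennreal_le_iff)
qed

lemma kernel_integral_bound:
  assumes "carleson s \<mu>" "0 \<le> \<gamma>" "\<gamma> < s" "s < \<gamma> + a"
  obtains C where
    "\<And>h. 0 < h \<Longrightarrow> h \<le> 1 \<Longrightarrow> integrable \<mu> (\<lambda>t. (1 - t) powr (-\<gamma>) * (h + (1 - t)) powr (-a))"
    "\<And>h. 0 < h \<Longrightarrow> h \<le> 1 \<Longrightarrow>
       (\<integral>t. (1 - t) powr (-\<gamma>) * (h + (1 - t)) powr (-a) \<partial>\<mu>) \<le> C * h powr (s - \<gamma> - a)"
proof -
  obtain K where K: "\<forall>t\<in>{0..<1}. measure \<mu> {t..<1} \<le> K * (1 - t) powr s"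
    using carleson_uniform_bound[OF assms(1)] assms(2,3) by auto
  have K0: "0 \<le> K" using K[rule_format, of 0] measure_nonneg[of \<mu> "{0..<1}"] by (simp del: measure_nonneg)
  obtain B where B: "0 \<le> B"
    "\<And>n. summable (\<lambda>k. 2 powr (real (Suc k) * \<gamma> + real (min (Suc k) (Suc n)) * a) * 2 powr (- real k * s))"
    "\<And>n h. 0 < h \<Longrightarrow> h \<le> (1/2)^n \<Longrightarrow>
       (\<Sum>k. 2 powr (real (Suc k) * \<gamma> + real (min (Suc k) (Suc n)) * a) * 2 powr (- real k * s))
         \<le> B * h powr (s - \<gamma> - a)"
    using dyadic_kernel_series[OF assms(3,4)] by blast
  define g where "g h t = (1 - t) powr (-\<gamma>) * (h + (1 - t)) powr (-a)" for h t :: real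
  have g: "g h \<in> borel_measurable \<mu>" "0 \<le> g h t" for h t
    unfolding g_def by (auto intro: borel_measurable_of_borel)
  have a: "0 < a" using assms by linarith
  have bound: "integrable \<mu> (g h) \<and> integral\<^sup>L \<mu> (g h) \<le> K * B * h powr (s - \<gamma> - a)"
    if h: "0 < h" "h \<le> 1" for h
  proof -
    obtain n where n: "(1/2)^Suc n < h" "h \<le> (1/2)^n" using dyadic_bracket[OF h] .
    define c where "c k = 2 powr (real (Suc k) * \<gamma> + real (min (Suc k) (Suc n)) * a)" for k
    have layer: "\<exists>k. 1 - (1/2)^k \<le> t \<and> g h t \<le> c k" if t: "t \<in> {0..<1}" for t
    proof -
      obtain k where k: "(1/2)^Suc k < 1 - t" "1 - t \<le> (1/2)^k"
        using dyadic_bracket[of "1 - t"] t by auto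
      then have "g h t \<le> c k"
        unfolding g_def c_def using kernel_le_dyadic_layer[OF assms(2) a k(1) n(1)] by (simp add: add.commute)
      moreover have "1 - (1/2)^k \<le> t" using k(2) by simp
      ultimately show ?thesis by blast
    qed
    have sum: "integrable \<mu> (g h)" "integral\<^sup>L \<mu> (g h) \<le> K * (\<Sum>k. c k * 2 powr (- real k * s))"
      using integral_le_dyadic_series[OF K _ _ g(1) _ layer] B(2) by (auto simp: c_def g(2))
    have "(\<Sum>k. c k * 2 powr (- real k * s)) \<le> B * h powr (s - \<gamma> - a)"
      unfolding c_def by (rule B(3)[OF h(1) n(2)])
    then have "K * (\<Sum>k. c k * 2 powr (- real k * s)) \<le> K * (B * h powr (s - \<gamma> - a))"
      using K0 by (rule mult_left_mono)
    then show ?thesis using sum by (simp add: mult.assoc)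
  qed
  show ?thesis
  proof (rule that[of "K * B"])
    fix h :: real assume "0 < h" "h \<le> 1"
    then show "integrable \<mu> (\<lambda>t. (1 - t) powr (-\<gamma>) * (h + (1 - t)) powr (-a))"
      and "(\<integral>t. (1 - t) powr (-\<gamma>) * (h + (1 - t)) powr (-a) \<partial>\<mu>) \<le> K * B * h powr (s - \<gamma> - a)"
      using bound unfolding g_def by blast+
  qed
qed

lemma tail_measure_le_moment:
  assumes "0 \<le> t"
  shows "t ^ n * measure \<mu> {t..<1} \<le> moment \<mu> n"
proof -
  have A: "{t..<1} \<in> sets \<mu>" using tail_in_sets[OF assms] .
  have "t ^ n * measure \<mu> {t..<1} = (\<integral>x. indicator {t..<1} x * t ^ n \<partial>\<mu>)"
    using A space_eq assms by (simp add: Int_absorb2)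
  also have "\<dots> \<le> (\<integral>x. x ^ n \<partial>\<mu>)"
  proof (rule integral_mono[OF _ integrable_power])
    show "integrable \<mu> (\<lambda>x. indicator {t..<1} x * t ^ n)"
      using A by (intro integrable_mult_left integrable_real_indicator) (auto simp: less_top[symmetric])
    show "indicator {t..<1} x * t ^ n \<le> x ^ n" if "x \<in> space \<mu>" for x
      using that space_eq assms by (auto simp: indicator_def intro: power_mono)
  qed
  finally show ?thesis unfolding moment_def .
qed

lemma moments_bigo_of_carleson:
  assumes "carleson s \<mu>" "0 < s"
  shows "(\<lambda>n. moment \<mu> n) \<in> O(\<lambda>n. 1 / real n powr s)"
proof -
  define m :: nat where "m = nat \<lceil>s\<rceil> + 1"
  have m: "s < real m" "1 \<le> m" unfolding m_def using assms(2) by linarith+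
  define G where "G h t = (1 - t) powr (-0) * (h + (1 - t)) powr (- real m)" for h t :: real
  have "s < 0 + real m" using m by simp
  then obtain C where C: "\<And>h. 0 < h \<Longrightarrow> h \<le> 1 \<Longrightarrow> integrable \<mu> (G h)"
    "\<And>h. 0 < h \<Longrightarrow> h \<le> 1 \<Longrightarrow> integral\<^sup>L \<mu> (G h) \<le> C * h powr (s - 0 - real m)"
    using kernel_integral_bound[OF assms(1) order_refl assms(2)] unfolding G_def by blast
  have "moment \<mu> n \<le> (2 * real m) ^ m * C * (1 / real n powr s)" if n: "m \<le> n" for n
  proof -
    define h where "h = 1 / real n"
    have npos: "0 < real n" using n m by simp
    have h: "0 < h" "h \<le> 1" using npos n m by (auto simp: h_def)
    have "t ^ n \<le> (2 * real m) ^ m / real n ^ m * G h t" if "t \<in> space \<mu>" for t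
      using power_le_kernel[of t m n] that space_eq m n by (auto simp: G_def h_def)
    then have "moment \<mu> n \<le> (\<integral>t. (2 * real m) ^ m / real n ^ m * G h t \<partial>\<mu>)"
      unfolding moment_def using C(1)[OF h] by (intro integral_mono integrable_power integrable_mult_right)
    also have "\<dots> = (2 * real m) ^ m / real n ^ m * integral\<^sup>L \<mu> (G h)"
      by (rule integral_mult_right_zero)
    also have "\<dots> \<le> (2 * real m) ^ m / real n ^ m * (C * h powr (s - 0 - real m))"
      by (intro mult_left_mono C(2)[OF h]) simp
    also have "h powr (s - 0 - real m) = real n ^ m / real n powr s"
      using npos by (simp add: h_def powr_divide powr_diff powr_realpow)
    finally show ?thesis using npos by simp
  qed
  moreover have "0 \<le> moment \<mu> n" for n
    unfolding moment_def using space_eq by (intro integral_nonneg_AE AE_I2) auto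
  ultimately have "eventually (\<lambda>n. norm (moment \<mu> n) \<le> (2 * real m) ^ m * C * norm (1 / real n powr s)) sequentially"
    unfolding eventually_sequentially by (intro exI[of _ m]) auto
  then show ?thesis by (rule bigoI)
qed

lemma carleson_of_moments_bigo:
  assumes "(\<lambda>n. moment \<mu> n) \<in> O(\<lambda>n. 1 / real n powr s)" "0 < s"
  shows "carleson s \<mu>"
proof -
  obtain c where "0 < c" "eventually (\<lambda>n. norm (moment \<mu> n) \<le> c * norm (1 / real n powr s)) sequentially"
    using assms(1) by (elim landau_o.bigE)
  then obtain N where N: "\<And>n. n \<ge> N \<Longrightarrow> norm (moment \<mu> n) \<le> c * norm (1 / real n powr s)"
    unfolding eventually_sequentially by blast
  have "measure \<mu> {t..<1} \<le> 2 * c * 4 powr s * (1 - t) powr s"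
    if t: "1 - 1 / (4 * (real N + 1)) < t" "t < 1" for t
  proof -
    define y where "y = 1 - t"
    have y: "0 < y" "4 * y * (real N + 1) < 1" using t by (auto simp: y_def field_simps)
    have "4 * y \<le> 4 * y * (real N + 1)" using mult_left_mono[of 1 "real N + 1" "4 * y"] y by simp
    then have "y \<le> 1/4" using y by linarith
    \<comment> \<open>the moment of order \<open>n \<approx> 1 / (2 y)\<close> sees at least half of the tail mass\<close>
    define n where "n = nat \<lfloor>1 / (2 * y)\<rfloor>"
    have n: "1/2 \<le> t ^ n" "1 / (4 * y) \<le> real n"
      using half_le_power_at_scale[OF y(1) \<open>y \<le> 1/4\<close>] by (simp_all add: n_def y_def)
    moreover have "real N + 1 < 1 / (4 * y)" using y by (simp add: field_simps)
    ultimately have "N \<le> n" "0 < 1 / (4 * y)" "0 < real n" by linarith+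
    have "measure \<mu> {t..<1} / 2 \<le> t ^ n * measure \<mu> {t..<1}"
      using mult_right_mono[OF n(1), of "measure \<mu> {t..<1}"] by simp
    also have "\<dots> \<le> moment \<mu> n" using tail_measure_le_moment \<open>y \<le> 1/4\<close> by (simp add: y_def)
    also have "\<dots> \<le> c / real n powr s" using N[OF \<open>N \<le> n\<close>] by (simp add: abs_le_iff)
    also have "\<dots> \<le> c / (1 / (4 * y)) powr s"
      using \<open>0 < c\<close> n(2) \<open>0 < 1 / (4 * y)\<close> \<open>0 < real n\<close> assms(2) by (intro divide_left_mono powr_mono2 mult_pos_pos) auto
    also have "\<dots> = c * 4 powr s * y powr s"
      using y by (simp add: powr_divide powr_mult)
    finally show ?thesis by (simp add: y_def)
  qed
  then have "eventually (\<lambda>t. norm (measure \<mu> {t..<1}) \<le> 2 * c * 4 powr s * norm ((1 - t) powr s)) (at_left 1)"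
    unfolding eventually_at_left_field by (intro exI[of _ "1 - 1 / (4 * (real N + 1))"]) auto
  then show ?thesis unfolding carleson_def by (rule bigoI)
qed

section \<open>Holomorphy of the Cauchy-type transform\<close>

lemma borel_measurable_of_real [measurable]: "(\<lambda>t. complex_of_real t) \<in> borel_measurable \<mu>"
  by (rule borel_measurable_of_borel) simp

lemma integrable_cauchy_kernel:
  fixes g :: "real \<Rightarrow> complex"
  assumes g: "integrable \<mu> g" and z: "norm z < 1"
  shows "integrable \<mu> (\<lambda>t. g t * of_real t ^ k / (1 - of_real t * z) ^ j)"
proof (rule Bochner_Integration.integrable_bound[where f = "\<lambda>t. norm (g t) / (1 - norm z) ^ j"])
  have [measurable]: "g \<in> borel_measurable \<mu>" using g by (rule borel_measurable_integrable)
  show "integrable \<mu> (\<lambda>t. norm (g t) / (1 - norm z) ^ j)" using g by simp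
  show "(\<lambda>t. g t * of_real t ^ k / (1 - of_real t * z) ^ j) \<in> borel_measurable \<mu>" by measurable
  show "AE t in \<mu>. norm (g t * of_real t ^ k / (1 - of_real t * z) ^ j) \<le> norm (norm (g t) / (1 - norm z) ^ j)"
  proof (rule AE_I2)
    fix t assume "t \<in> space \<mu>"
    then have t: "0 \<le> t" "t < 1" using space_eq by auto
    have "norm (g t * of_real t ^ k / (1 - of_real t * z) ^ j) = norm (g t) * t ^ k / norm (1 - of_real t * z) ^ j"
      using t by (simp add: norm_mult norm_divide norm_power)
    also have "\<dots> \<le> norm (g t) * 1 / (1 - norm z) ^ j"
      using t z norm_one_minus_real_mult_ge(1)[of t z]
      by (intro divide_mono mult_left_mono power_le_one power_mono zero_less_power) auto
    finally show "norm (g t * of_real t ^ k / (1 - of_real t * z) ^ j) \<le> norm (norm (g t) / (1 - norm z) ^ j)"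
      using z by simp
  qed
qed

lemma cauchy_transform_remainder_le:
  fixes g :: "real \<Rightarrow> complex"
  assumes g: "integrable \<mu> g" and z: "norm z < 1" and w: "norm (w - z) < (1 - norm z) / 2"
  shows "norm ((\<integral>t. g t / (1 - of_real t * w) \<partial>\<mu>) - (\<integral>t. g t / (1 - of_real t * z) \<partial>\<mu>)
            - (w - z) * (\<integral>t. g t * of_real t / (1 - of_real t * z) ^ 2 \<partial>\<mu>))
         \<le> norm (w - z) ^ 2 * ((\<integral>t. norm (g t) \<partial>\<mu>) / ((1 - norm z) / 2 * (1 - norm z) ^ 2))"
proof -
  define r where "r = (1 - norm z) / 2"
  have r: "0 < r" "r \<le> 1 - norm w"
    using z w norm_triangle_ineq2[of w z] by (auto simp: r_def norm_minus_commute)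
  then have w1: "norm w < 1" by simp
  define K where "K = norm (w - z) ^ 2 / (r * (1 - norm z) ^ 2)"
  have ints: "integrable \<mu> (\<lambda>t. g t / (1 - of_real t * w))" "integrable \<mu> (\<lambda>t. g t / (1 - of_real t * z))"
    "integrable \<mu> (\<lambda>t. g t * of_real t / (1 - of_real t * z) ^ 2)"
    using integrable_cauchy_kernel[OF g w1, of 0 1] integrable_cauchy_kernel[OF g z, of 0 1]
      integrable_cauchy_kernel[OF g z, of 1 2] by simp_all
  have lin: "(\<integral>t. g t / (1 - of_real t * w) \<partial>\<mu>) - (\<integral>t. g t / (1 - of_real t * z) \<partial>\<mu>)
            - (w - z) * (\<integral>t. g t * of_real t / (1 - of_real t * z) ^ 2 \<partial>\<mu>)
      = (\<integral>t. g t / (1 - of_real t * w) - g t / (1 - of_real t * z) - (w - z) * (g t * of_real t / (1 - of_real t * z) ^ 2) \<partial>\<mu>)"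
    by (simp only: Bochner_Integration.integral_diff[OF Bochner_Integration.integrable_diff[OF ints(1,2)]
          integrable_mult_right[OF ints(3)]] Bochner_Integration.integral_diff[OF ints(1,2)] integral_mult_right_zero)
  have "norm (\<integral>t. g t / (1 - of_real t * w) - g t / (1 - of_real t * z) - (w - z) * (g t * of_real t / (1 - of_real t * z) ^ 2) \<partial>\<mu>)
      \<le> (\<integral>t. K * norm (g t) \<partial>\<mu>)"
  proof (rule Bochner_Integration.integral_norm_bound_integral)
    show "integrable \<mu> (\<lambda>t. g t / (1 - of_real t * w) - g t / (1 - of_real t * z) - (w - z) * (g t * of_real t / (1 - of_real t * z) ^ 2))"
      using ints by (intro Bochner_Integration.integrable_diff integrable_mult_right)
    show "integrable \<mu> (\<lambda>t. K * norm (g t))" using g by simp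
    fix t assume "t \<in> space \<mu>"
    then have t: "0 \<le> t" "t \<le> 1" using space_eq by auto
    have "norm (g t / (1 - of_real t * w) - g t / (1 - of_real t * z) - (w - z) * (g t * of_real t / (1 - of_real t * z) ^ 2))
        \<le> norm (w - z) ^ 2 * norm (g t) / ((1 - norm w) * (1 - norm z) ^ 2)"
      using t z w1 by (rule norm_cauchy_kernel_remainder_le)
    also have "\<dots> \<le> norm (w - z) ^ 2 * norm (g t) / (r * (1 - norm z) ^ 2)"
      using r z by (intro divide_left_mono mult_right_mono mult_pos_pos) auto
    finally show "norm (g t / (1 - of_real t * w) - g t / (1 - of_real t * z) - (w - z) * (g t * of_real t / (1 - of_real t * z) ^ 2))
        \<le> K * norm (g t)" by (simp add: K_def)
  qed
  also have "(\<integral>t. K * norm (g t) \<partial>\<mu>) = norm (w - z) ^ 2 * ((\<integral>t. norm (g t) \<partial>\<mu>) / ((1 - norm z) / 2 * (1 - norm z) ^ 2))"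
    by (simp add: K_def r_def)
  finally show ?thesis unfolding lin .
qed

lemma holomorphic_cauchy_transform:
  fixes g :: "real \<Rightarrow> complex"
  assumes g: "integrable \<mu> g"
  shows "(\<lambda>z. \<integral>t. g t / (1 - of_real t * z) \<partial>\<mu>) holomorphic_on ball 0 1"
proof -
  define F where "F z = (\<integral>t. g t / (1 - of_real t * z) \<partial>\<mu>)" for z
  have "(F has_field_derivative (\<integral>t. g t * of_real t / (1 - of_real t * z) ^ 2 \<partial>\<mu>)) (at z)"
    if z: "norm z < 1" for z
  proof -
    define D where "D = (\<integral>t. g t * of_real t / (1 - of_real t * z) ^ 2 \<partial>\<mu>)"
    define M where "M = (\<integral>t. norm (g t) \<partial>\<mu>) / ((1 - norm z) / 2 * (1 - norm z) ^ 2)"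
    have "norm ((F w - F z) / (w - z) - D) \<le> M * norm (w - z)"
      if "norm (w - z) < (1 - norm z) / 2" "w \<noteq> z" for w
    proof -
      have "(F w - F z) / (w - z) - D = (F w - F z - (w - z) * D) / (w - z)"
        using that by (simp add: field_simps)
      then have "norm ((F w - F z) / (w - z) - D) = norm (F w - F z - (w - z) * D) / norm (w - z)"
        by (simp add: norm_divide)
      also have "\<dots> \<le> norm (w - z) ^ 2 * M / norm (w - z)"
        using cauchy_transform_remainder_le[OF g z that(1)]
        by (intro divide_right_mono) (simp_all add: F_def D_def M_def)
      also have "\<dots> = M * norm (w - z)" using that(2) by (simp add: power2_eq_square)
      finally show ?thesis .
    qed
    then have "eventually (\<lambda>w. norm ((F w - F z) / (w - z) - D) \<le> M * norm (w - z)) (at z)"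
      unfolding eventually_at using z by (intro exI[of _ "(1 - norm z) / 2"]) (auto simp: dist_norm)
    moreover have "((\<lambda>w. M * norm (w - z)) \<longlongrightarrow> 0) (at z)"
      by (auto intro!: tendsto_eq_intros)
    ultimately have "((\<lambda>w. (F w - F z) / (w - z) - D) \<longlongrightarrow> 0) (at z)"
      by (rule Lim_null_comparison)
    then show ?thesis unfolding D_def[symmetric] has_field_derivative_iff by (rule LIM_zero_cancel)
  qed
  then show ?thesis unfolding F_def[symmetric] holomorphic_on_open[OF open_ball] by (metis mem_ball_0)
qed

lemma Imu_defined_if_integrable:
  assumes "integrable \<mu> (\<lambda>t. f (of_real t))"
  shows "Imu_defined \<mu> f"
proof -
  have "integrable \<mu> (\<lambda>t. f (of_real t) / (1 - of_real t * z))" if "z \<in> ball 0 1" for z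
    using integrable_cauchy_kernel[OF assms, of z 0 1] that by simp
  moreover have "Imu \<mu> f = (\<lambda>z. \<integral>t. f (of_real t) / (1 - of_real t * z) \<partial>\<mu>)"
    by (simp add: Imu_def fun_eq_iff)
  ultimately show ?thesis
    unfolding Imu_defined_def using holomorphic_cauchy_transform[OF assms] by simp
qed

lemma integrable_of_real_if_Hinf:
  assumes f: "Hinf g f" and w: "integrable \<mu> (\<lambda>t. (1 - t) powr (-g))"
  shows "integrable \<mu> (\<lambda>t. f (of_real t))"
proof (rule Bochner_Integration.integrable_bound[where f = "\<lambda>t. wnorm g f * (1 - t) powr (-g)"])
  show "integrable \<mu> (\<lambda>t. wnorm g f * (1 - t) powr (-g))" using w by simp
  have "continuous_on (ball 0 1) f"
    using f unfolding Hinf_def by (intro holomorphic_on_imp_continuous_on) auto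
  moreover have "continuous_on {0..<1} (\<lambda>t. complex_of_real t)"
    by (intro continuous_on_of_real continuous_on_id)
  moreover have "complex_of_real ` {0..<1} \<subseteq> ball 0 1" by auto
  ultimately have "continuous_on {0..<1} (\<lambda>t. f (of_real t))" by (rule continuous_on_compose2)
  then show "(\<lambda>t. f (of_real t)) \<in> borel_measurable \<mu>" by (rule borel_measurable_of_continuous_on)
  show "AE t in \<mu>. norm (f (of_real t)) \<le> norm (wnorm g f * (1 - t) powr (-g))"
  proof (rule AE_I2)
    fix t assume "t \<in> space \<mu>"
    then have "norm (f (of_real t)) \<le> wnorm g f * (1 - t) powr (-g)"
      using Hinf_norm_of_real_le[OF f] space_eq by simp
    then show "norm (f (of_real t)) \<le> norm (wnorm g f * (1 - t) powr (-g))" by simp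
  qed
qed

section \<open>Necessity of the Carleson condition\<close>

lemma Imu_test_fun_of_real:
  assumes "0 \<le> x" "x < 1"
  shows "Imu \<mu> (test_fun \<gamma> x) (of_real x) = of_real (\<integral>t. (1 - x * t) powr (- (\<gamma> + 1)) \<partial>\<mu>)"
proof -
  have "test_fun \<gamma> x (of_real t) / (1 - of_real t * of_real x) = of_real ((1 - x * t) powr (- (\<gamma> + 1)))"
    if "t \<in> space \<mu>" for t
  proof -
    have "0 < 1 - x * t" using that assms space_eq mult_left_le[of t x] by auto
    then have eq: "(1 - x * t) powr (-\<gamma>) / (1 - x * t) = (1 - x * t) powr (- (\<gamma> + 1))"
      using powr_add[of "1 - x * t" "-\<gamma>" "-1"] by (simp add: powr_minus_divide)
    have num: "test_fun \<gamma> x (of_real t) = of_real ((1 - x * t) powr (-\<gamma>))"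
      using that assms space_eq by (intro test_fun_of_real) auto
    have den: "1 - of_real t * of_real x = (of_real (1 - x * t) :: complex)" by simp
    show ?thesis unfolding num den eq[symmetric] by (rule of_real_divide[symmetric])
  qed
  then show ?thesis unfolding Imu_def by (subst Bochner_Integration.integral_cong[OF refl]) auto
qed

lemma tail_measure_le_Imu_test_fun:
  assumes "0 \<le> \<gamma>" "0 \<le> x" "x < 1"
  shows "measure \<mu> {x..<1} \<le> (2 * (1 - x)) powr (\<gamma> + 1) * norm (Imu \<mu> (test_fun \<gamma> x) (of_real x))"
proof -
  define \<phi> where "\<phi> t = (1 - x * t) powr (- (\<gamma> + 1))" for t
  have xt: "1 - x \<le> 1 - x * t" "0 < 1 - x * t" if "t \<in> space \<mu>" for t
    using that assms space_eq mult_left_le[of t x] by auto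
  have \<phi>: "integrable \<mu> \<phi>"
  proof (rule integrable_const_bound[where B = "(1 - x) powr (- (\<gamma> + 1))"])
    show "AE t in \<mu>. norm (\<phi> t) \<le> (1 - x) powr (- (\<gamma> + 1))"
      using xt assms by (intro AE_I2) (auto simp: \<phi>_def intro!: powr_mono2')
    show "\<phi> \<in> borel_measurable \<mu>" unfolding \<phi>_def by (rule borel_measurable_of_borel) measurable
  qed
  define c where "c = (2 * (1 - x)) powr (- (\<gamma> + 1))"
  have "indicator {x..<1} t * c \<le> \<phi> t" if "t \<in> space \<mu>" for t
  proof (cases "x \<le> t")
    case True
    have "x * x \<le> x * t" using True assms by (intro mult_left_mono) auto
    moreover have "0 \<le> 1 - 2 * x + x * x" using zero_le_square[of "1 - x"] by (simp add: algebra_simps)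
    ultimately have "1 - x * t \<le> 2 * (1 - x)" by (simp add: algebra_simps)
    then have "c \<le> \<phi> t"
      unfolding \<phi>_def c_def using xt[OF that] assms by (intro powr_mono2') auto
    moreover have "t < 1" using that space_eq by auto
    ultimately show ?thesis using True by simp
  qed (simp add: \<phi>_def)
  then have "(\<integral>t. indicator {x..<1} t * c \<partial>\<mu>) \<le> integral\<^sup>L \<mu> \<phi>"
    using tail_in_sets[OF assms(2)]
    by (intro integral_mono \<phi> integrable_mult_left integrable_real_indicator) (auto simp: less_top[symmetric])
  moreover have "Imu \<mu> (test_fun \<gamma> x) (of_real x) = of_real (integral\<^sup>L \<mu> \<phi>)"
    unfolding \<phi>_def[abs_def] by (rule Imu_test_fun_of_real[OF assms(2,3)])
  ultimately have lower: "measure \<mu> {x..<1} * c \<le> norm (Imu \<mu> (test_fun \<gamma> x) (of_real x))"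
    using tail_in_sets[OF assms(2)] space_eq assms(2) by (simp add: Int_absorb2)
  define p where "p = (2 * (1 - x)) powr (\<gamma> + 1)"
  have "c * p = 1" using assms by (simp add: c_def p_def flip: powr_add)
  then have "measure \<mu> {x..<1} = measure \<mu> {x..<1} * c * p" by (simp add: mult.assoc)
  also have "\<dots> \<le> norm (Imu \<mu> (test_fun \<gamma> x) (of_real x)) * p"
    using lower by (rule mult_right_mono) (simp add: p_def)
  finally show ?thesis by (simp add: p_def mult.commute)
qed

lemma carleson_of_test_fun_bound:
  assumes "0 \<le> \<gamma>"
    and bound: "\<And>x. 0 \<le> x \<Longrightarrow> x < 1 \<Longrightarrow> (1 - x) powr (\<gamma> + \<delta>) * norm (Imu \<mu> (test_fun \<gamma> x) (of_real x)) \<le> C"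
  shows "carleson (1 - \<delta>) \<mu>"
proof (rule carleson_of_uniform_bound)
  fix x :: real assume "x \<in> {0..<1}"
  then have x: "0 \<le> x" "x < 1" by auto
  have "\<gamma> + 1 = (1 - \<delta>) + (\<gamma> + \<delta>)" by simp
  then have "(1 - x) powr (\<gamma> + 1) = (1 - x) powr (1 - \<delta>) * (1 - x) powr (\<gamma> + \<delta>)"
    by (metis powr_add)
  moreover have "(2 * (1 - x)) powr (\<gamma> + 1) = 2 powr (\<gamma> + 1) * (1 - x) powr (\<gamma> + 1)"
    using x powr_mult[of 2 "1 - x" "\<gamma> + 1"] by simp
  ultimately have "(2 * (1 - x)) powr (\<gamma> + 1) = 2 powr (\<gamma> + 1) * (1 - x) powr (1 - \<delta>) * (1 - x) powr (\<gamma> + \<delta>)"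
    by (simp add: mult.assoc)
  then have "measure \<mu> {x..<1} \<le> 2 powr (\<gamma> + 1) * (1 - x) powr (1 - \<delta>) * ((1 - x) powr (\<gamma> + \<delta>) * norm (Imu \<mu> (test_fun \<gamma> x) (of_real x)))"
    using tail_measure_le_Imu_test_fun[OF assms(1) x] by (simp add: mult.assoc)
  also have "\<dots> \<le> 2 powr (\<gamma> + 1) * (1 - x) powr (1 - \<delta>) * C"
    using bound[OF x] by (intro mult_left_mono) auto
  finally show "measure \<mu> {x..<1} \<le> 2 powr (\<gamma> + 1) * C * (1 - x) powr (1 - \<delta>)" by (simp add: mult_ac)
qed

lemma carleson_of_Imu_bounded:
  assumes "Imu_bounded \<mu> Sp \<gamma> (\<gamma> + \<delta>)" "0 < \<gamma>"
    and Sp: "\<And>g f. Sp g f \<Longrightarrow> Hinf g f" "\<And>r. 0 \<le> r \<Longrightarrow> r < 1 \<Longrightarrow> Sp \<gamma> (test_fun \<gamma> r)"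
  shows "carleson (1 - \<delta>) \<mu>"
proof -
  obtain C where C: "\<And>f. Sp \<gamma> f \<Longrightarrow> wnorm (\<gamma> + \<delta>) (Imu \<mu> f) \<le> C * wnorm \<gamma> f"
    and maps: "\<And>f. Sp \<gamma> f \<Longrightarrow> Sp (\<gamma> + \<delta>) (Imu \<mu> f)"
    using assms(1) unfolding Imu_bounded_def by blast
  show ?thesis
  proof (rule carleson_of_test_fun_bound[where C = "max C 0"])
    fix x :: real assume x: "0 \<le> x" "x < 1"
    have f: "Sp \<gamma> (test_fun \<gamma> x)" using Sp(2)[OF x] .
    have "(1 - x) powr (\<gamma> + \<delta>) * norm (Imu \<mu> (test_fun \<gamma> x) (of_real x)) \<le> wnorm (\<gamma> + \<delta>) (Imu \<mu> (test_fun \<gamma> x))"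
      using Hinf_weighted_norm_le_wnorm[OF Sp(1)[OF maps[OF f]], of "of_real x"] x by (simp add: weight_of_real)
    also have "\<dots> \<le> C * wnorm \<gamma> (test_fun \<gamma> x)" by (rule C[OF f])
    also have "\<dots> \<le> max C 0"
      using test_fun_in_H0(2)[OF x assms(2)] wnorm_nonneg[OF Sp(1)[OF f]]
      by (metis max.cobounded1 max.cobounded2 mult_left_le mult_right_mono order_trans)
    finally show "(1 - x) powr (\<gamma> + \<delta>) * norm (Imu \<mu> (test_fun \<gamma> x) (of_real x)) \<le> max C 0" .
  qed (use assms(2) in simp)
qed

section \<open>Sufficiency of the Carleson condition\<close>

lemma cauchy_majorant_integral_bound:
  assumes "carleson (1 - \<delta>) \<mu>" "0 \<le> \<gamma>" "- \<gamma> < \<delta>" "\<delta> < 1 - \<gamma>"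
  obtains C where "\<And>h. 0 < h \<Longrightarrow> h \<le> 1 \<Longrightarrow> integrable \<mu> (cauchy_majorant \<gamma> h)"
    "\<And>h. 0 < h \<Longrightarrow> h \<le> 1 \<Longrightarrow> h powr (\<gamma> + \<delta>) * integral\<^sup>L \<mu> (cauchy_majorant \<gamma> h) \<le> C"
proof -
  have "\<gamma> < 1 - \<delta>" "1 - \<delta> < \<gamma> + 1" using assms by linarith+
  then obtain C where C:
    "\<And>h. 0 < h \<Longrightarrow> h \<le> 1 \<Longrightarrow> integrable \<mu> (cauchy_majorant \<gamma> h)"
    "\<And>h. 0 < h \<Longrightarrow> h \<le> 1 \<Longrightarrow> integral\<^sup>L \<mu> (cauchy_majorant \<gamma> h) \<le> C * h powr (1 - \<delta> - \<gamma> - 1)"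
    using kernel_integral_bound[OF assms(1,2)] unfolding cauchy_majorant_def[abs_def] by blast
  have "h powr (\<gamma> + \<delta>) * integral\<^sup>L \<mu> (cauchy_majorant \<gamma> h) \<le> C" if h: "0 < h" "h \<le> 1" for h
  proof -
    have "h powr (\<gamma> + \<delta>) * integral\<^sup>L \<mu> (cauchy_majorant \<gamma> h) \<le> h powr (\<gamma> + \<delta>) * (C * h powr (1 - \<delta> - \<gamma> - 1))"
      using C(2)[OF h] by (rule mult_left_mono) simp
    also have "\<dots> = C * (h powr (\<gamma> + \<delta>) * h powr (1 - \<delta> - \<gamma> - 1))" by (simp add: mult_ac)
    also have "h powr (\<gamma> + \<delta>) * h powr (1 - \<delta> - \<gamma> - 1) = 1" using h by (simp flip: powr_add)
    finally show ?thesis by simp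
  qed
  with C(1) show ?thesis using that by blast
qed

lemma integrable_weight_of_carleson:
  assumes "carleson (1 - \<delta>) \<mu>" "0 \<le> \<gamma>" "- \<gamma> < \<delta>" "\<delta> < 1 - \<gamma>"
  shows "integrable \<mu> (\<lambda>t. (1 - t) powr (-\<gamma>))"
proof (rule Bochner_Integration.integrable_bound)
  obtain C where "\<And>h. 0 < h \<Longrightarrow> h \<le> 1 \<Longrightarrow> integrable \<mu> (cauchy_majorant \<gamma> h)"
    using cauchy_majorant_integral_bound[OF assms] by blast
  from this[OF zero_less_one order_refl]
  show "integrable \<mu> (\<lambda>t. 2 * cauchy_majorant \<gamma> 1 t)" by (rule integrable_mult_right)
  show "(\<lambda>t. (1 - t) powr (-\<gamma>)) \<in> borel_measurable \<mu>" by (rule borel_measurable_of_borel) measurable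
  show "AE t in \<mu>. norm ((1 - t) powr (-\<gamma>)) \<le> norm (2 * cauchy_majorant \<gamma> 1 t)"
  proof (rule AE_I2)
    fix t assume "t \<in> space \<mu>"
    then have t: "0 \<le> t" "t < 1" using space_eq by auto
    have "1 \<le> 2 * (1 + (1 - t)) powr (-1)" using t by (simp add: powr_minus_divide)
    then have "(1 - t) powr (-\<gamma>) * 1 \<le> (1 - t) powr (-\<gamma>) * (2 * (1 + (1 - t)) powr (-1))"
      by (rule mult_left_mono) simp
    then show "norm ((1 - t) powr (-\<gamma>)) \<le> norm (2 * cauchy_majorant \<gamma> 1 t)"
      by (simp add: cauchy_majorant_def mult_ac)
  qed
qed

lemma norm_Imu_le:
  assumes "integrable \<mu> (\<lambda>t. f (of_real t))" "norm z < 1" "integrable \<mu> P"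
    and "\<And>t. 0 \<le> t \<Longrightarrow> t < 1 \<Longrightarrow> norm (f (of_real t) / (1 - of_real t * z)) \<le> P t"
  shows "norm (Imu \<mu> f z) \<le> integral\<^sup>L \<mu> P"
  unfolding Imu_def
  using integrable_cauchy_kernel[OF assms(1,2), of 0 1] assms(3,4) space_eq
  by (intro Bochner_Integration.integral_norm_bound_integral) auto

lemma Imu_Hinf_bound:
  assumes "carleson (1 - \<delta>) \<mu>" "0 < \<gamma>" "- \<gamma> < \<delta>" "\<delta> < 1 - \<gamma>"
  obtains C where "\<And>f. Hinf \<gamma> f \<Longrightarrow>
    Imu_defined \<mu> f \<and> Hinf (\<gamma> + \<delta>) (Imu \<mu> f) \<and> wnorm (\<gamma> + \<delta>) (Imu \<mu> f) \<le> C * wnorm \<gamma> f"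
proof -
  obtain C where C: "\<And>h. 0 < h \<Longrightarrow> h \<le> 1 \<Longrightarrow> integrable \<mu> (cauchy_majorant \<gamma> h)"
    "\<And>h. 0 < h \<Longrightarrow> h \<le> 1 \<Longrightarrow> h powr (\<gamma> + \<delta>) * integral\<^sup>L \<mu> (cauchy_majorant \<gamma> h) \<le> C"
    using cauchy_majorant_integral_bound[OF assms(1) less_imp_le[OF assms(2)] assms(3,4)] by blast
  have "Imu_defined \<mu> f \<and> Hinf (\<gamma> + \<delta>) (Imu \<mu> f) \<and> wnorm (\<gamma> + \<delta>) (Imu \<mu> f) \<le> 2 * C * wnorm \<gamma> f"
    if f: "Hinf \<gamma> f" for f
  proof -
    have int: "integrable \<mu> (\<lambda>t. f (of_real t))"
      using integrable_of_real_if_Hinf[OF f integrable_weight_of_carleson] assms by auto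
    have bound: "vw (\<gamma> + \<delta>) z * norm (Imu \<mu> f z) \<le> 2 * C * wnorm \<gamma> f" if z: "z \<in> ball 0 1" for z
    proof -
      define h where "h = 1 - norm z"
      have h: "0 < h" "h \<le> 1" using z by (auto simp: h_def)
      have "norm (Imu \<mu> f z) \<le> (\<integral>t. 2 * wnorm \<gamma> f * cauchy_majorant \<gamma> h t \<partial>\<mu>)"
      proof (rule norm_Imu_le[OF int])
        show "integrable \<mu> (\<lambda>t. 2 * wnorm \<gamma> f * cauchy_majorant \<gamma> h t)"
          using C(1)[OF h] by (rule integrable_mult_right)
        fix t :: real assume "0 \<le> t" "t < 1"
        then show "norm (f (of_real t) / (1 - of_real t * z)) \<le> 2 * wnorm \<gamma> f * cauchy_majorant \<gamma> h t"
          unfolding h_def using z Hinf_norm_of_real_le[OF f]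
          by (intro norm_divide_one_minus_real_mult_le) auto
      qed (use z in simp)
      also have "\<dots> = 2 * wnorm \<gamma> f * integral\<^sup>L \<mu> (cauchy_majorant \<gamma> h)" by simp
      finally have "h powr (\<gamma> + \<delta>) * norm (Imu \<mu> f z)
          \<le> h powr (\<gamma> + \<delta>) * (2 * wnorm \<gamma> f * integral\<^sup>L \<mu> (cauchy_majorant \<gamma> h))"
        by (rule mult_left_mono) simp
      also have "\<dots> = 2 * wnorm \<gamma> f * (h powr (\<gamma> + \<delta>) * integral\<^sup>L \<mu> (cauchy_majorant \<gamma> h))"
        by (simp add: mult_ac)
      also have "\<dots> \<le> 2 * wnorm \<gamma> f * C"
        using C(2)[OF h] wnorm_nonneg[OF f] by (intro mult_left_mono) auto
      finally show ?thesis using z by (simp add: vw_def h_def mult_ac)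
    qed
    have "Imu_defined \<mu> f" by (rule Imu_defined_if_integrable[OF int])
    moreover have "Hinf (\<gamma> + \<delta>) (Imu \<mu> f)"
      using \<open>Imu_defined \<mu> f\<close> bound unfolding Imu_defined_def by (intro HinfI) auto
    moreover have "wnorm (\<gamma> + \<delta>) (Imu \<mu> f) \<le> 2 * C * wnorm \<gamma> f" using bound by (rule wnorm_le)
    ultimately show ?thesis by blast
  qed
  then show ?thesis using that by blast
qed

lemma Imu_vanishes_at_boundary:
  assumes carleson: "carleson (1 - \<delta>) \<mu>" and \<gamma>\<delta>: "0 < \<gamma>" "- \<gamma> < \<delta>" "\<delta> < 1 - \<gamma>"
    and f: "H0 \<gamma> f" and e: "0 < e"
  shows "\<exists>r<1. \<forall>z\<in>ball 0 1. r < norm z \<longrightarrow> vw (\<gamma> + \<delta>) z * norm (Imu \<mu> f z) < e"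
proof -
  have f_Hinf: "Hinf \<gamma> f" using f by (simp add: H0_def)
  have int: "integrable \<mu> (\<lambda>t. f (of_real t))"
    using integrable_of_real_if_Hinf[OF f_Hinf integrable_weight_of_carleson[OF carleson]] \<gamma>\<delta> by auto
  obtain C where C: "\<And>h. 0 < h \<Longrightarrow> h \<le> 1 \<Longrightarrow> integrable \<mu> (cauchy_majorant \<gamma> h)"
    "\<And>h. 0 < h \<Longrightarrow> h \<le> 1 \<Longrightarrow> h powr (\<gamma> + \<delta>) * integral\<^sup>L \<mu> (cauchy_majorant \<gamma> h) \<le> C"
    using cauchy_majorant_integral_bound[OF carleson less_imp_le[OF \<gamma>\<delta>(1)] \<gamma>\<delta>(2,3)] by blast
  \<comment> \<open>near 1 the weighted size of \<open>f\<close> is at most \<open>\<epsilon>\<close>; on \<open>[0, r1]\<close> the integrand is bounded by \<open>B\<close>\<close>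
  define \<epsilon> where "\<epsilon> = e / (4 * (\<bar>C\<bar> + 1))"
  have \<epsilon>: "0 < \<epsilon>" using e by (simp add: \<epsilon>_def add_pos_nonneg)
  have "2 * \<epsilon> * C \<le> 2 * \<epsilon> * (\<bar>C\<bar> + 1)" using \<epsilon> by (intro mult_left_mono) auto
  also have "\<dots> = e / 2" by (simp add: \<epsilon>_def field_simps add_pos_nonneg)
  finally have \<epsilon>C: "2 * \<epsilon> * C \<le> e / 2" .
  obtain r1 where r1: "0 \<le> r1" "r1 < 1"
    and near: "\<And>t. r1 < t \<Longrightarrow> t < 1 \<Longrightarrow> norm (f (of_real t)) \<le> \<epsilon> * (1 - t) powr (-\<gamma>)"
    using H0_norm_of_real_small[OF f \<epsilon>] by blast
  define B where "B = wnorm \<gamma> f * (1 - r1) powr (-\<gamma>) / (1 - r1)"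
  define M where "M = measure \<mu> (space \<mu>)"
  have B: "0 \<le> B" using wnorm_nonneg[OF f_Hinf] r1 by (simp add: B_def)
  then have BM: "0 \<le> B * M" by (simp add: M_def)
  obtain r2 where r2: "r2 < 1" "\<And>z. norm z < 1 \<Longrightarrow> r2 < norm z \<Longrightarrow> vw (\<gamma> + \<delta>) z < e / (2 * (B * M + 1))"
    using weight_small_near_boundary[of "\<gamma> + \<delta>" "e / (2 * (B * M + 1))"] \<gamma>\<delta> e BM by auto
  have "vw (\<gamma> + \<delta>) z * norm (Imu \<mu> f z) < e" if z: "z \<in> ball 0 1" "r2 < norm z" for z
  proof -
    define h where "h = 1 - norm z"
    have h: "0 < h" "h \<le> 1" using z by (auto simp: h_def)
    have "norm (f (of_real t) / (1 - of_real t * z)) \<le> 2 * \<epsilon> * cauchy_majorant \<gamma> h t + B"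
      if "0 \<le> t" "t < 1" for t
      unfolding h_def B_def using z that r1 \<gamma>\<delta> \<epsilon> near Hinf_norm_of_real_le[OF f_Hinf that]
      by (intro norm_divide_one_minus_real_mult_split_le) auto
    then have "norm (Imu \<mu> f z) \<le> (\<integral>t. 2 * \<epsilon> * cauchy_majorant \<gamma> h t + B \<partial>\<mu>)"
      using z C(1)[OF h] by (intro norm_Imu_le int Bochner_Integration.integrable_add integrable_mult_right) auto
    also have "\<dots> = 2 * \<epsilon> * integral\<^sup>L \<mu> (cauchy_majorant \<gamma> h) + B * M"
      using C(1)[OF h] by (simp add: M_def mult.commute)
    finally have "h powr (\<gamma> + \<delta>) * norm (Imu \<mu> f z)
        \<le> h powr (\<gamma> + \<delta>) * (2 * \<epsilon> * integral\<^sup>L \<mu> (cauchy_majorant \<gamma> h) + B * M)"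
      by (rule mult_left_mono) simp
    also have "\<dots> = 2 * \<epsilon> * (h powr (\<gamma> + \<delta>) * integral\<^sup>L \<mu> (cauchy_majorant \<gamma> h)) + B * M * h powr (\<gamma> + \<delta>)"
      by (simp add: algebra_simps)
    also have "\<dots> < e / 2 + (B * M + 1) * (e / (2 * (B * M + 1)))"
    proof (rule add_le_less_mono)
      show "2 * \<epsilon> * (h powr (\<gamma> + \<delta>) * integral\<^sup>L \<mu> (cauchy_majorant \<gamma> h)) \<le> e / 2"
        using mult_left_mono[OF C(2)[OF h], of "2 * \<epsilon>"] \<epsilon> \<epsilon>C by linarith
      show "B * M * h powr (\<gamma> + \<delta>) < (B * M + 1) * (e / (2 * (B * M + 1)))"
        using r2(2)[of z] z BM by (intro mult_strict_mono') (auto simp: vw_def h_def)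
    qed
    also have "\<dots> = e" using BM by (simp add: field_simps)
    finally show ?thesis using z by (simp add: vw_def h_def)
  qed
  then show ?thesis using r2(1) by blast
qed

lemma Imu_bounded_if_carleson:
  assumes "carleson (1 - \<delta>) \<mu>" "0 < \<gamma>" "- \<gamma> < \<delta>" "\<delta> < 1 - \<gamma>"
  shows "Imu_bounded \<mu> Hinf \<gamma> (\<gamma> + \<delta>)" "Imu_bounded \<mu> H0 \<gamma> (\<gamma> + \<delta>)"
proof -
  obtain C where C: "\<And>f. Hinf \<gamma> f \<Longrightarrow>
    Imu_defined \<mu> f \<and> Hinf (\<gamma> + \<delta>) (Imu \<mu> f) \<and> wnorm (\<gamma> + \<delta>) (Imu \<mu> f) \<le> C * wnorm \<gamma> f"
    using Imu_Hinf_bound[OF assms] by blast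
  show "Imu_bounded \<mu> Hinf \<gamma> (\<gamma> + \<delta>)" unfolding Imu_bounded_def using C by blast
  have "H0 (\<gamma> + \<delta>) (Imu \<mu> f)" if "H0 \<gamma> f" for f
    using C[of f] Imu_vanishes_at_boundary[OF assms that] that unfolding H0_def by blast
  then show "Imu_bounded \<mu> H0 \<gamma> (\<gamma> + \<delta>)" unfolding Imu_bounded_def using C H0_def by blast
qed

end

theorem theorem16:
  fixes \<mu> :: "real measure" and \<gamma> \<delta> :: real
  assumes "finite_measure \<mu>"
    and "space \<mu> = {0..<1}"
    and "sets \<mu> = sets (restrict_space borel {0..<1})"
    and "\<gamma> > 0" and "- \<gamma> < \<delta>" and "\<delta> < 1 - \<gamma>"
  shows "(Imu_bounded \<mu> Hinf \<gamma> (\<gamma> + \<delta>)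
           \<longleftrightarrow> Imu_bounded \<mu> H0 \<gamma> (\<gamma> + \<delta>) \<and> integrable \<mu> (\<lambda>t. 1 / (1 - t) powr \<gamma>))
       \<and> (Imu_bounded \<mu> H0 \<gamma> (\<gamma> + \<delta>) \<and> integrable \<mu> (\<lambda>t. 1 / (1 - t) powr \<gamma>)
           \<longleftrightarrow> carleson (1 - \<delta>) \<mu>)
       \<and> (carleson (1 - \<delta>) \<mu>
           \<longleftrightarrow> (\<lambda>n. moment \<mu> n) \<in> O(\<lambda>n. 1 / real n powr (1 - \<delta>)))"
proof -
  interpret unit_interval_measure \<mu>
    using assms(1-3) by (simp add: unit_interval_measure_def unit_interval_measure_axioms_def)
  have \<gamma>\<delta>: "0 < \<gamma>" "- \<gamma> < \<delta>" "\<delta> < 1 - \<gamma>" "0 < 1 - \<delta>" using assms(4-6) by linarith+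
  have "carleson (1 - \<delta>) \<mu>" if "Imu_bounded \<mu> Hinf \<gamma> (\<gamma> + \<delta>)"
    using carleson_of_Imu_bounded[OF that \<gamma>\<delta>(1)] test_fun_in_H0 \<gamma>\<delta>(1) by (auto simp: H0_def)
  moreover have "carleson (1 - \<delta>) \<mu>" if "Imu_bounded \<mu> H0 \<gamma> (\<gamma> + \<delta>)"
    using carleson_of_Imu_bounded[OF that \<gamma>\<delta>(1)] test_fun_in_H0 \<gamma>\<delta>(1) by (auto simp: H0_def)
  moreover have "integrable \<mu> (\<lambda>t. 1 / (1 - t) powr \<gamma>)" if "carleson (1 - \<delta>) \<mu>"
    using integrable_weight_of_carleson[OF that] \<gamma>\<delta> by (simp add: powr_minus_divide)
  moreover note Imu_bounded_if_carleson[OF _ \<gamma>\<delta>(1-3)]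
  moreover have "carleson (1 - \<delta>) \<mu> \<longleftrightarrow> (\<lambda>n. moment \<mu> n) \<in> O(\<lambda>n. 1 / real n powr (1 - \<delta>))"
    using moments_bigo_of_carleson carleson_of_moments_bigo \<gamma>\<delta>(4) by blast
  ultimately show ?thesis by blast
qed

end
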